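(* Let $\gamma\in\mathbb{R}$, $d>0$, and let $I:\mathbb{R}\to\mathbb{R}$ be a continuous $2\pi$-periodic function. Consider the system on the two-torus $(\mathbb{R}/2\pi\mathbb{Z})^2$ $$\dot\phi_1=\gamma-\sin\phi_1+d\,I(\phi_2),\qquad \dot\phi_2=\gamma-\sin\phi_2+d\,I(\phi_1).$$ Its equilibria are of two types: those on the diagonal $\phi_1=\phi_2$ (first type) and those off the diagonal (second type), the latter occurring in symmetric pairs $(a,b)$, $(b,a)$. If the system has an equilibrium of the second type, i.e. an equilibrium $(a,b)$ with $a\neq b$ (mod $2\pi$), then it also has an equilibrium of the first type, i.e. there exists $\xi$ with $\gamma-\sin\xi+d\,I(\xi)=0$. *)

theory Defs
  imports "HOL-Analysis.Analysis"
begin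

end

theory Submission
  imports Defs
begin

text \<open>On the diagonal the right-hand side is \<open>f x = \<gamma> - sin x + d * I x\<close>. Subtracting the
  two equilibrium equations gives \<open>f a = sin b - sin a = - f b\<close>, so \<open>f\<close> changes sign between
  \<open>a\<close> and \<open>b\<close> and vanishes there by the intermediate value theorem.\<close>

lemma continuous_on_closed_segment_zero_if_opposite_values:
  fixes f :: "real \<Rightarrow> real"
  assumes "continuous_on (closed_segment a b) f" and "f b = - f a"
  shows "\<exists>x\<in>closed_segment a b. f x = 0"
proof -
  have "connected (f ` closed_segment a b)"
    using assms(1) connected_continuous_image connected_segment by blast
  moreover have "f a \<in> f ` closed_segment a b" "f b \<in> f ` closed_segment a b"
    by auto
  moreover have "min (f a) (f b) \<le> 0" "0 \<le> max (f a) (f b)"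
    using assms(2) by auto
  ultimately have "0 \<in> f ` closed_segment a b"
    by (metis connectedD_interval max_def min_def)
  then show ?thesis
    by (metis image_iff)
qed

theorem mainTheorem2:
  fixes \<gamma> d :: real and I :: "real \<Rightarrow> real" and a b :: real
  assumes "d > 0"
    and "continuous_on UNIV I"
    and "\<And>x. I (x + 2 * pi) = I x"
    and "\<gamma> - sin a + d * I b = 0"
    and "\<gamma> - sin b + d * I a = 0"
    and "\<forall>k::int. a - b \<noteq> 2 * pi * of_int k"
  shows "\<exists>\<xi>. \<gamma> - sin \<xi> + d * I \<xi> = 0"
proof -
  define f where "f x = \<gamma> - sin x + d * I x" for x
  have "continuous_on (closed_segment a b) f"
    unfolding f_def by (intro continuous_intros continuous_on_subset[OF assms(2)]) auto
  moreover have "f b = - f a"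
    using assms(4,5) unfolding f_def by simp
  ultimately show ?thesis
    using continuous_on_closed_segment_zero_if_opposite_values unfolding f_def by blast
qed

end
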